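(* Let $K>1$ and let $\kappa=(x_i)_{i\in\mathbb Z}$ and $\eta=(y_i)_{i\in\mathbb Z}$ be independent $K$-contracting axes in a geodesic metric space $X$. Then there exists $K'>0$ such that: (1) for every set $J$ of consecutive integers, $\kappa|_J=(x_i)_{i\in J}$ and $\eta|_J=(y_i)_{i\in J}$ are $K'$-contracting axes; (2) for every set $J$ of consecutive integers containing $0$, $\operatorname{diam}\big(x_0\cup\pi_{\kappa|_J}(\eta)\big)<K'$; (3) for every positive integer $M$, $\operatorname{diam}\big(x_0\cup\pi_{\{x_0,\ldots,x_M\}}(\{x_i:i\le0\})\big)<K'$.
   Context: $X$ is a geodesic metric space. For $A\subseteq X$, $\pi_A(z)=\{a\in A:d(z,a)=d(z,A)\}$ and $\pi_A(B)=\bigcup_{b\in B}\pi_A(b)$. $A$ is $K$-contracting if $\pi_A(z)\ne\emptyset$ for all $z$ and $d(x,y)\le d(x,A)-K$ implies $\operatorname{diam}(\pi_A(x)\cup\pi_A(y))\le K$. A $K$-contracting axis indexed by a set $J$ of consecutive integers is a family $(x_i)_{i\in J}$ with $|i-j|/K-K\le d(x_i,x_j)\le K|i-j|+K$ whose image is $K$-contracting; projections onto it mean onto its image. Sequences $(x_i),(y_i)$ indexed by $\mathbb Z$ are independent if for every $M>0$ the set $\{(n,m):d(x_n,y_m)<M\}$ is bounded. *)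

theory Defs
  imports "HOL-Analysis.Analysis"
begin

text \<open>The ambient geodesic metric space X is the whole type 'a.\<close>

definition geodesic_space :: "'a::metric_space itself \<Rightarrow> bool" where
  "geodesic_space _ \<longleftrightarrow> (\<forall>x y::'a. \<exists>g::real \<Rightarrow> 'a. g 0 = x \<and> g (dist x y) = y \<and>
     (\<forall>s\<in>{0..dist x y}. \<forall>t\<in>{0..dist x y}. dist (g s) (g t) = \<bar>s - t\<bar>))"

definition proj :: "'a::metric_space set \<Rightarrow> 'a \<Rightarrow> 'a set" where
  "proj A z = {a \<in> A. dist z a = infdist z A}"

definition proj_set :: "'a::metric_space set \<Rightarrow> 'a set \<Rightarrow> 'a set" where
  "proj_set A B = (\<Union>b\<in>B. proj A b)"

text \<open>Diameter with values in the extended reals (infinite for unbounded sets).\<close>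
definition diam :: "'a::metric_space set \<Rightarrow> ereal" where
  "diam S = (SUP p\<in>S \<times> S. ereal (dist (fst p) (snd p)))"

definition contracting :: "real \<Rightarrow> 'a::metric_space set \<Rightarrow> bool" where
  "contracting K A \<longleftrightarrow> (\<forall>z. proj A z \<noteq> {}) \<and>
     (\<forall>x y. dist x y \<le> infdist x A - K \<longrightarrow> diam (proj A x \<union> proj A y) \<le> ereal K)"

definition consecutive :: "int set \<Rightarrow> bool" where
  "consecutive J \<longleftrightarrow> J \<noteq> {} \<and> (\<forall>a\<in>J. \<forall>b\<in>J. \<forall>c. a \<le> c \<and> c \<le> b \<longrightarrow> c \<in> J)"

definition contracting_axis :: "real \<Rightarrow> int set \<Rightarrow> (int \<Rightarrow> 'a::metric_space) \<Rightarrow> bool" where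
  "contracting_axis K J x \<longleftrightarrow> consecutive J \<and>
     (\<forall>i\<in>J. \<forall>j\<in>J. \<bar>real_of_int (i - j)\<bar> / K - K \<le> dist (x i) (x j) \<and>
                    dist (x i) (x j) \<le> K * \<bar>real_of_int (i - j)\<bar> + K) \<and>
     contracting K (x ` J)"

definition independent :: "(int \<Rightarrow> 'a::metric_space) \<Rightarrow> (int \<Rightarrow> 'a) \<Rightarrow> bool" where
  "independent x y \<longleftrightarrow> (\<forall>M>0. \<exists>N. \<forall>n m. dist (x n) (y m) < M \<longrightarrow> \<bar>n\<bar> \<le> N \<and> \<bar>m\<bar> \<le> N)"

end

theory Submission
  imports Defs
begin

(* Closest-point projection to a contracting axis has bounded geodesic image: a geodesic staying
   3K away from the axis projects to a set of diameter at most 8K.  Hence geodesics between axis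
   points stay 28K-close to the axis, and the axis is uniformly straight: x b lies near every
   geodesic from x j to x k when j <= b <= k.  For a segment J, the projection of z onto x ` J is
   therefore close to x c, where c is the index of the projection of z onto the whole axis clamped
   into J; this gives (1) with a constant independent of J, and (3) by clamping the ray i <= 0 to 0.
   For (2), independence pushes y m far from the axis x for large |m|, while geodesics between
   points y m stay close to y; by bounded geodesic image the projections of y onto x have bounded
   indices, and clamping keeps them bounded. *)

lemma diam_leI:
  assumes "\<And>a b. a \<in> S \<Longrightarrow> b \<in> S \<Longrightarrow> dist a b \<le> c"
  shows "diam S \<le> ereal c"
  unfolding diam_def using assms by (auto intro!: SUP_least)

lemma dist_le_diam:
  assumes "diam S \<le> ereal c" "a \<in> S" "b \<in> S"
  shows "dist a b \<le> c"
proof -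
  have "ereal (dist a b) \<le> diam S"
    unfolding diam_def using assms(2,3) by (intro SUP_upper2[of "(a, b)"]) auto
  then have "ereal (dist a b) \<le> ereal c" using assms(1) by (rule order_trans)
  then show ?thesis by simp
qed

lemma diam_insert_centre_le:
  assumes "\<And>e. e \<in> S \<Longrightarrow> dist e c \<le> B" "0 \<le> B"
  shows "diam ({c} \<union> S) \<le> ereal (2 * B)"
proof (rule diam_leI)
  fix a b assume "a \<in> {c} \<union> S" "b \<in> {c} \<union> S"
  then have "dist a c \<le> B" "dist b c \<le> B" using assms by auto
  then show "dist a b \<le> 2 * B" using dist_triangle2[of a b c] by linarith
qed

lemma proj_memD: "p \<in> proj A z \<Longrightarrow> p \<in> A \<and> dist z p = infdist z A"
  unfolding proj_def by auto

lemma infdist_geI: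
  assumes "A \<noteq> {}" "\<And>a. a \<in> A \<Longrightarrow> c \<le> dist z a"
  shows "c \<le> infdist z A"
  using assms by (simp add: infdist_notempty cINF_greatest)

lemma contracting_axis_mono:
  assumes "contracting_axis c J x" "c \<le> c'" "c > 0"
  shows "contracting_axis c' J x"
  unfolding contracting_axis_def
proof (intro conjI ballI)
  show "consecutive J" using assms(1) unfolding contracting_axis_def by simp
  fix i j assume ij: "i \<in> J" "j \<in> J"
  have "\<bar>real_of_int (i - j)\<bar> / c' \<le> \<bar>real_of_int (i - j)\<bar> / c"
    using assms(2,3) by (intro divide_left_mono) auto
  then show "\<bar>real_of_int (i - j)\<bar> / c' - c' \<le> dist (x i) (x j)"
    using assms ij unfolding contracting_axis_def by fastforce
  have "c * \<bar>real_of_int (i - j)\<bar> \<le> c' * \<bar>real_of_int (i - j)\<bar>"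
    using assms(2) by (intro mult_right_mono) auto
  then show "dist (x i) (x j) \<le> c' * \<bar>real_of_int (i - j)\<bar> + c'"
    using assms ij unfolding contracting_axis_def by fastforce
next
  have c: "contracting c (x ` J)" using assms(1) unfolding contracting_axis_def by simp
  show "contracting c' (x ` J)" unfolding contracting_def
  proof (intro conjI allI impI)
    fix z show "proj (x ` J) z \<noteq> {}" using c unfolding contracting_def by simp
  next
    fix z w assume "dist z w \<le> infdist z (x ` J) - c'"
    then have "dist z w \<le> infdist z (x ` J) - c" using assms(2) by simp
    then have "diam (proj (x ` J) z \<union> proj (x ` J) w) \<le> ereal c"
      using c unfolding contracting_def by simp
    then show "diam (proj (x ` J) z \<union> proj (x ` J) w) \<le> ereal c'"
      using assms(2) by (simp add: order_trans)
  qed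
qed

lemma contracting_axis_reflect:
  assumes "contracting_axis K UNIV y"
  shows "contracting_axis K UNIV (\<lambda>m. y (- m))"
proof -
  have "range (\<lambda>m. y (- m)) = range y"
  proof
    show "range y \<subseteq> range (\<lambda>m. y (- m))"
    proof
      fix b assume "b \<in> range y"
      then obtain m where "b = y m" by auto
      then show "b \<in> range (\<lambda>m. y (- m))" by (metis minus_minus rangeI)
    qed
  qed auto
  moreover have "\<bar>real_of_int (i - j)\<bar> / K - K \<le> dist (y (- i)) (y (- j)) \<and>
      dist (y (- i)) (y (- j)) \<le> K * \<bar>real_of_int (i - j)\<bar> + K" for i j
  proof -
    have "\<bar>real_of_int (- i - - j)\<bar> = \<bar>real_of_int (i - j)\<bar>"
      by (simp only: minus_diff_minus of_int_minus abs_minus_cancel)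
    then show ?thesis using assms unfolding contracting_axis_def by (metis UNIV_I)
  qed
  ultimately show ?thesis using assms unfolding contracting_axis_def by simp
qed

lemma independent_reflect:
  assumes "independent x y"
  shows "independent x (\<lambda>m. y (- m))"
  unfolding independent_def
proof (intro allI impI)
  fix M :: real assume "M > 0"
  then obtain N where "\<forall>n m. dist (x n) (y m) < M \<longrightarrow> \<bar>n\<bar> \<le> N \<and> \<bar>m\<bar> \<le> N"
    using assms unfolding independent_def by blast
  then show "\<exists>N. \<forall>n m. dist (x n) (y (- m)) < M \<longrightarrow> \<bar>n\<bar> \<le> N \<and> \<bar>m\<bar> \<le> N"
    by (intro exI[of _ N]) force
qed

definition isometric_on :: "real set \<Rightarrow> (real \<Rightarrow> 'a::metric_space) \<Rightarrow> bool" where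
  "isometric_on S g \<longleftrightarrow> (\<forall>s\<in>S. \<forall>t\<in>S. dist (g s) (g t) = \<bar>s - t\<bar>)"

lemma geodesic_spaceE:
  fixes u v :: "'a::metric_space"
  assumes "geodesic_space TYPE('a)"
  obtains g :: "real \<Rightarrow> 'a" where "g 0 = u" "g (dist u v) = v" "isometric_on {0..dist u v} g"
  using assms unfolding geodesic_space_def isometric_on_def by blast

lemma isometric_onD: "isometric_on S g \<Longrightarrow> s \<in> S \<Longrightarrow> t \<in> S \<Longrightarrow> dist (g s) (g t) = \<bar>s - t\<bar>"
  unfolding isometric_on_def by blast

lemma isometric_on_subset: "isometric_on S g \<Longrightarrow> T \<subseteq> S \<Longrightarrow> isometric_on T g"
  unfolding isometric_on_def by blast

lemma isometric_on_continuous: "isometric_on S g \<Longrightarrow> continuous_on S g"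
  unfolding continuous_on_iff isometric_on_def
  by (metis dist_real_def)

lemma isometric_on_reflect:
  "isometric_on {a..b} g \<Longrightarrow> isometric_on {a..b} (\<lambda>s. g (a + b - s))"
  unfolding isometric_on_def by (auto simp: abs_minus_commute)

lemma isometric_on_dist_add:
  assumes "isometric_on {a..b} g" "t \<in> {a..b}"
  shows "dist (g a) (g t) + dist (g t) (g b) = dist (g a) (g b)"
  using assms isometric_onD[OF assms(1)] by auto

lemma dist_le_by_small_steps_nat:
  fixes P :: "real \<Rightarrow> 'a::metric_space"
  assumes "h > 0" "c \<ge> 0"
    and step: "\<And>s t. s \<in> {\<alpha>..\<beta>} \<Longrightarrow> t \<in> {\<alpha>..\<beta>} \<Longrightarrow> \<bar>s - t\<bar> \<le> h \<Longrightarrow> dist (P s) (P t) \<le> c"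
  shows "t \<in> {\<alpha>..\<beta>} \<Longrightarrow> t - \<alpha> \<le> real n * h \<Longrightarrow> dist (P \<alpha>) (P t) \<le> real n * c"
proof (induction n arbitrary: t)
  case 0
  then show ?case by simp
next
  case (Suc n)
  define t' where "t' = max \<alpha> (t - h)"
  have t': "t' \<in> {\<alpha>..\<beta>}" "t' - \<alpha> \<le> real n * h"
    using Suc.prems assms(1) unfolding t'_def by (auto simp: algebra_simps max_def)
  have "dist (P \<alpha>) (P t) \<le> dist (P \<alpha>) (P t') + dist (P t') (P t)" by (rule dist_triangle)
  also have "\<dots> \<le> real n * c + c"
    using Suc.IH[OF t'] step[OF t'(1) Suc.prems(1)] Suc.prems assms(1) unfolding t'_def
    by (intro add_mono) (auto simp: max_def)
  finally show ?case by (simp add: algebra_simps)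
qed

lemma dist_le_by_small_steps:
  fixes P :: "real \<Rightarrow> 'a::metric_space"
  assumes "h > 0" "c \<ge> 0" "\<alpha> \<le> \<beta>"
    and step: "\<And>s t. s \<in> {\<alpha>..\<beta>} \<Longrightarrow> t \<in> {\<alpha>..\<beta>} \<Longrightarrow> \<bar>s - t\<bar> \<le> h \<Longrightarrow> dist (P s) (P t) \<le> c"
  shows "dist (P \<alpha>) (P \<beta>) \<le> c * (\<beta> - \<alpha>) / h + c"
proof -
  define n where "n = nat \<lceil>(\<beta> - \<alpha>) / h\<rceil>"
  have "0 \<le> (\<beta> - \<alpha>) / h" using assms(1,3) by simp
  then have n: "(\<beta> - \<alpha>) / h \<le> real n" "real n \<le> (\<beta> - \<alpha>) / h + 1"
    unfolding n_def by linarith+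
  then have "\<beta> - \<alpha> \<le> real n * h" using assms(1) by (simp add: divide_le_eq)
  then have "dist (P \<alpha>) (P \<beta>) \<le> real n * c"
    using dist_le_by_small_steps_nat[where P = P and \<alpha> = \<alpha> and \<beta> = \<beta>, OF assms(1,2) step] assms(3)
    by simp
  also have "\<dots> \<le> ((\<beta> - \<alpha>) / h + 1) * c" using n assms(2) by (intro mult_right_mono) auto
  finally show ?thesis by (simp add: algebra_simps)
qed

lemma unit_step_partition:
  assumes "0 \<le> L"
  obtains N :: nat and t :: "nat \<Rightarrow> real"
  where "t 0 = 0" "t N = L" "\<And>i. i \<le> N \<Longrightarrow> t i \<in> {0..L}" "\<And>i. \<bar>t (Suc i) - t i\<bar> \<le> 1"
proof
  define N where "N = nat \<lceil>L\<rceil> + 1"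
  have N: "real N > 0" "L \<le> real N" unfolding N_def using assms by linarith+
  show "(\<lambda>i. real i * L / real N) 0 = 0" "(\<lambda>i. real i * L / real N) N = L" using N by auto
  fix i
  show "i \<le> N \<Longrightarrow> real i * L / real N \<in> {0..L}"
    using N assms by (auto simp: divide_le_eq mult_left_mono mult.commute)
  have "real (Suc i) * L / real N - real i * L / real N = L / real N"
    by (simp add: add_divide_distrib distrib_right)
  then show "\<bar>real (Suc i) * L / real N - real i * L / real N\<bar> \<le> 1"
    using N assms by (simp add: divide_le_eq)
qed

lemma discrete_intermediate_value:
  fixes a :: "nat \<Rightarrow> real"
  assumes "a 0 \<le> b + c" "b - c \<le> a N" "\<And>i. i < N \<Longrightarrow> \<bar>a (Suc i) - a i\<bar> \<le> W" "0 \<le> c" "0 \<le> W"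
  obtains i where "i \<le> N" "\<bar>a i - b\<bar> \<le> W + c"
proof (cases "\<exists>i\<le>N. a i \<le> b")
  case False
  then show ?thesis using assms(1,4,5) that[of 0] by auto
next
  case True
  define i where "i = Max {i. i \<le> N \<and> a i \<le> b}"
  have i: "i \<le> N" "a i \<le> b" and i_max: "\<And>j. j \<le> N \<Longrightarrow> a j \<le> b \<Longrightarrow> j \<le> i"
    using True Max_in[of "{i. i \<le> N \<and> a i \<le> b}"] unfolding i_def by auto
  show ?thesis
  proof (cases "i = N")
    case True
    then show ?thesis using i assms(2,5) that[of N] by auto
  next
    case False
    then have "i < N" using i by simp
    then have "b < a (Suc i)" using i_max[of "Suc i"] by fastforce
    then show ?thesis using assms(3)[OF \<open>i < N\<close>] i assms(4) that[of i] by auto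
  qed
qed

lemma first_sublevel_time:
  fixes f :: "real \<Rightarrow> real"
  assumes "a \<le> b" "continuous_on {a..b} f" "\<exists>t\<in>{a..b}. f t \<le> c"
  obtains t where "t \<in> {a..b}" "f t \<le> c" "\<And>s. s \<in> {a..b} \<Longrightarrow> f s \<le> c \<Longrightarrow> t \<le> s"
    "t = a \<or> (\<forall>s\<in>{a..t}. c \<le> f s)"
proof -
  define T where "T = {a..b} \<inter> f -` {..c}"
  have "closed T" unfolding T_def using assms(2) by (intro continuous_closed_preimage) auto
  moreover have "T \<noteq> {}" "bdd_below T" using assms(3) unfolding T_def by (auto intro: bdd_belowI[of _ a])
  ultimately have tT: "Inf T \<in> T" by (rule closed_contains_Inf[rotated -1])
  have t_min: "Inf T \<le> s" if "s \<in> {a..b}" "f s \<le> c" for s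
    using that \<open>bdd_below T\<close> unfolding T_def by (intro cInf_lower) auto
  have before: "\<forall>s\<in>{a..Inf T}. c \<le> f s" if "Inf T \<noteq> a"
  proof -
    have below: "c < f s" if "a \<le> s" "s < Inf T" for s
      using t_min[of s] that tT unfolding T_def by force
    have "a < Inf T" using that tT unfolding T_def by auto
    then have "c \<le> f a" using below[of a] by simp
    moreover have "f (Inf T) \<le> c" using tT unfolding T_def by simp
    moreover have "continuous_on {a..Inf T} f"
      using assms(2) tT unfolding T_def by (auto elim: continuous_on_subset)
    ultimately obtain s where s: "a \<le> s" "s \<le> Inf T" "f s = c"
      using IVT2'[of f "Inf T" c a] \<open>a < Inf T\<close> by auto
    then have "s = Inf T" using t_min[of s] tT unfolding T_def by force
    show ?thesis
    proof
      fix r assume r: "r \<in> {a..Inf T}"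
      then consider "r < Inf T" | "r = Inf T" by fastforce
      then show "c \<le> f r" using below[of r] s \<open>s = Inf T\<close> r by cases auto
    qed
  qed
  show ?thesis
  proof (rule that[of "Inf T"])
    show "Inf T \<in> {a..b}" "f (Inf T) \<le> c" using tT unfolding T_def by auto
  qed (use t_min before in auto)
qed

definition is_clamp :: "int set \<Rightarrow> int \<Rightarrow> int \<Rightarrow> bool" where
  "is_clamp J k c \<longleftrightarrow> c \<in> J \<and> (c = k \<or> (c < k \<and> (\<forall>i\<in>J. i \<le> c)) \<or> (k < c \<and> (\<forall>i\<in>J. c \<le> i)))"

lemma int_set_has_greatest:
  fixes J :: "int set"
  assumes "j \<in> J" "\<And>i. i \<in> J \<Longrightarrow> i \<le> k"
  shows "\<exists>c\<in>J. \<forall>i\<in>J. i \<le> c"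
proof
  define c where "c = Max (J \<inter> {j..k})"
  have fin: "finite (J \<inter> {j..k})" and j: "j \<in> J \<inter> {j..k}" using assms by auto
  show "c \<in> J" using Max_in[OF fin] j unfolding c_def by blast
  show "\<forall>i\<in>J. i \<le> c"
  proof
    fix i assume "i \<in> J"
    show "i \<le> c"
    proof (cases "j \<le> i")
      case True
      with \<open>i \<in> J\<close> assms(2) show ?thesis unfolding c_def by (intro Max_ge[OF fin]) auto
    next
      case False
      with Max_ge[OF fin j] show ?thesis unfolding c_def by simp
    qed
  qed
qed

lemma is_clamp_exists:
  assumes J: "consecutive J"
  obtains c where "is_clamp J k c"
proof -
  obtain j where j: "j \<in> J" using J unfolding consecutive_def by auto
  have "k \<in> J \<or> (\<forall>i\<in>J. i < k) \<or> (\<forall>i\<in>J. k < i)"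
  proof (rule ccontr)
    assume "\<not> ?thesis"
    then obtain i i' where "i \<in> J" "i' \<in> J" "i \<le> k" "k \<le> i'" "k \<notin> J" by (auto simp: not_less)
    then show False using J unfolding consecutive_def by blast
  qed
  then consider "k \<in> J" | "\<forall>i\<in>J. i < k" | "\<forall>i\<in>J. k < i" by blast
  then show ?thesis
  proof cases
    case 1
    then show ?thesis using that unfolding is_clamp_def by blast
  next
    case 2
    then obtain c where "c \<in> J" "\<forall>i\<in>J. i \<le> c" using int_set_has_greatest[OF j, of k] by fastforce
    then show ?thesis using 2 that[of c] unfolding is_clamp_def by auto
  next
    case 3
    have "- j \<in> uminus ` J" using j by simp
    moreover have "i \<le> - k" if "i \<in> uminus ` J" for i using that 3 by auto
    ultimately obtain c where c: "c \<in> uminus ` J" "\<forall>i\<in>uminus ` J. i \<le> c"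
      using int_set_has_greatest by metis
    have "- c \<in> J" using c(1) by auto
    moreover have "- c \<le> i" if "i \<in> J" for i using c(2)[rule_format, of "- i"] that by simp
    ultimately show ?thesis using 3 that[of "- c"] unfolding is_clamp_def by auto
  qed
qed

lemma is_clamp_dist_le:
  assumes "is_clamp J k c" "is_clamp J k' c'"
  shows "\<bar>c - c'\<bar> \<le> \<bar>k - k'\<bar>"
  using assms unfolding is_clamp_def by (smt (verit))

lemma is_clamp_abs_le:
  assumes "is_clamp J k c" "0 \<in> J"
  shows "\<bar>c\<bar> \<le> \<bar>k\<bar>"
  using assms unfolding is_clamp_def by force

definition straightness_const :: "real \<Rightarrow> real" where
  "straightness_const K = K * (K * (57*K + 1) + K * K) + 29*K"

definition proj_const :: "real \<Rightarrow> real" where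
  "proj_const K = 2 * straightness_const K + 28*K"

definition sub_axis_const :: "real \<Rightarrow> real" where
  "sub_axis_const K = 2 * proj_const K + 18 * K^3 + 30*K + 2 * straightness_const K + 1"

locale contracting_line =
  fixes K :: real and x :: "int \<Rightarrow> 'a::metric_space"
  assumes geodesic: "geodesic_space TYPE('a)" and K_gt_1: "K > 1"
    and axis: "contracting_axis K UNIV x"
begin

lemma K_pos: "K > 0"
  using K_gt_1 by simp

lemma straightness_const_nonneg: "0 \<le> straightness_const K"
  unfolding straightness_const_def using K_pos by simp

lemma proj_const_nonneg: "0 \<le> proj_const K"
  unfolding proj_const_def using K_pos straightness_const_nonneg by simp

lemma sub_axis_const_ge: "K \<le> sub_axis_const K" "28*K + 2 * straightness_const K < sub_axis_const K"
  "2 * proj_const K + 18 * K^3 + 2*K \<le> sub_axis_const K"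
  using K_pos zero_less_power[OF K_pos, of 3] proj_const_nonneg straightness_const_nonneg
  unfolding sub_axis_const_def by linarith+

lemma dist_axis_lower: "\<bar>real_of_int (i - j)\<bar> / K - K \<le> dist (x i) (x j)"
  using axis unfolding contracting_axis_def by blast

lemma dist_axis_upper: "dist (x i) (x j) \<le> K * \<bar>real_of_int (i - j)\<bar> + K"
  using axis unfolding contracting_axis_def by blast

lemma index_diff_le:
  assumes "dist (x i) (x j) \<le> s"
  shows "\<bar>real_of_int (i - j)\<bar> \<le> K * (s + K)"
proof -
  have "\<bar>real_of_int (i - j)\<bar> / K \<le> s + K" using assms dist_axis_lower[of i j] by linarith
  then show ?thesis using K_pos by (simp add: divide_le_eq mult.commute)
qed

lemma proj_nonempty: "proj (range x) z \<noteq> {}"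
  using axis unfolding contracting_axis_def contracting_def by auto

lemma proj_close:
  assumes "dist z w \<le> infdist z (range x) - K"
    and "p \<in> proj (range x) z" "q \<in> proj (range x) w"
  shows "dist p q \<le> K"
proof -
  have "diam (proj (range x) z \<union> proj (range x) w) \<le> ereal K"
    using axis assms(1) unfolding contracting_axis_def contracting_def by auto
  then show ?thesis using dist_le_diam assms(2,3) by blast
qed

lemma proj_axis_point: "a \<in> range x \<Longrightarrow> proj (range x) a = {a}"
  unfolding proj_def by auto

lemma proj_dist_le:
  assumes "p \<in> proj (range x) z" "q \<in> proj (range x) z"
  shows "dist p q \<le> 2*K"
proof (cases "K \<le> infdist z (range x)")
  case True
  then show ?thesis using proj_close[of z z p q] assms K_pos by auto
next
  case False
  then show ?thesis
    using proj_memD[OF assms(1)] proj_memD[OF assms(2)] dist_triangle3[of p q z] by linarith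
qed

definition nearest_index :: "'a \<Rightarrow> int" where
  "nearest_index z = (SOME n. x n \<in> proj (range x) z)"

abbreviation nearest :: "'a \<Rightarrow> 'a" where
  "nearest z \<equiv> x (nearest_index z)"

lemma nearest_in_proj: "nearest z \<in> proj (range x) z"
proof -
  have "\<exists>n. x n \<in> proj (range x) z" using proj_nonempty proj_memD by fast
  then show ?thesis unfolding nearest_index_def by (rule someI_ex)
qed

lemma nearest_index_axis_point: "\<bar>real_of_int (nearest_index (x j) - j)\<bar> \<le> K * K"
proof -
  have "nearest (x j) = x j" using nearest_in_proj[of "x j"] proj_axis_point[of "x j"] by auto
  then show ?thesis using index_diff_le[of "nearest_index (x j)" j 0] by simp
qed

lemma proj_index_le:
  assumes "x k \<in> proj (range x) z"
  shows "\<bar>real_of_int k\<bar> \<le> K * (2 * dist z (x 0) + K)"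
proof -
  have "dist z (x k) \<le> dist z (x 0)"
    using proj_memD[OF assms] infdist_le[of "x 0" "range x" z] by simp
  then have "dist (x k) (x 0) \<le> 2 * dist z (x 0)"
    using dist_triangle[of "x k" "x 0" z] by (simp add: dist_commute)
  then show ?thesis using index_diff_le[of k 0] by simp
qed

lemma proj_close_on_geodesic:
  assumes "isometric_on S g" "s \<in> S" "t \<in> S" "\<bar>s - t\<bar> \<le> infdist (g s) (range x) - K"
    and "p \<in> proj (range x) (g s)" "q \<in> proj (range x) (g t)"
  shows "dist p q \<le> K"
  using proj_close[OF _ assms(5,6)] isometric_onD[OF assms(1-3)] assms(4) by simp

lemma proj_drift_far_path:
  assumes "\<alpha> \<le> \<beta>" "isometric_on {\<alpha>..\<beta>} g"
    and far: "\<And>t. t \<in> {\<alpha>..\<beta>} \<Longrightarrow> 3*K \<le> infdist (g t) (range x)"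
  shows "dist (nearest (g \<alpha>)) (nearest (g \<beta>)) \<le> (\<beta> - \<alpha>) / 2 + K"
proof -
  have "dist (nearest (g s)) (nearest (g t)) \<le> K"
    if "s \<in> {\<alpha>..\<beta>}" "t \<in> {\<alpha>..\<beta>}" "\<bar>s - t\<bar> \<le> 2*K" for s t
    using proj_close_on_geodesic[OF assms(2) that(1,2) _ nearest_in_proj nearest_in_proj]
      far[OF that(1)] that(3) by simp
  then have "dist (nearest (g \<alpha>)) (nearest (g \<beta>)) \<le> K * (\<beta> - \<alpha>) / (2*K) + K"
    using K_pos assms(1) by (intro dist_le_by_small_steps) auto
  then show ?thesis using K_pos by simp
qed

lemma bounded_geodesic_image:
  assumes "a \<le> b" and iso: "isometric_on {a..b} g"
    and far: "\<And>t. t \<in> {a..b} \<Longrightarrow> 3*K \<le> infdist (g t) (range x)"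
    and p: "p \<in> proj (range x) (g a)" and q: "q \<in> proj (range x) (g b)"
  shows "dist p q \<le> 8*K"
proof -
  \<comment> \<open>Up to time \<open>\<alpha>\<close> (from time \<open>\<beta>\<close>) contraction alone keeps the projection within \<open>K\<close>
    of that of \<open>g a\<close> (of \<open>g b\<close>); in between it drifts at most half the elapsed time.\<close>
  define \<alpha> where "\<alpha> = a + infdist (g a) (range x) - K"
  define \<beta> where "\<beta> = b - infdist (g b) (range x) + K"
  have \<alpha>: "a \<le> \<alpha>" and \<beta>: "\<beta> \<le> b"
    using far[of a] far[of b] assms(1) K_pos unfolding \<alpha>_def \<beta>_def by auto
  have "dist (g a) (g b) \<le> dist (g a) p + dist p q + dist q (g b)"
    by (meson dist_triangle order_trans add_right_mono)
  then have len: "\<beta> - \<alpha> \<le> dist p q + 2*K"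
    using isometric_onD[OF iso, of a b] assms(1) proj_memD[OF p] proj_memD[OF q]
    unfolding \<alpha>_def \<beta>_def by (simp add: dist_commute)
  consider "b \<le> \<alpha>" | "\<alpha> < b" "\<beta> \<le> \<alpha>" | "\<alpha> < \<beta>" using \<beta> by linarith
  then show ?thesis
  proof cases
    case 1
    then have "dist p q \<le> K"
      using proj_close_on_geodesic[OF iso _ _ _ p q] assms(1) unfolding \<alpha>_def by auto
    then show ?thesis using K_pos by linarith
  next
    case 2
    have "dist p (nearest (g \<alpha>)) \<le> K"
      using proj_close_on_geodesic[OF iso _ _ _ p nearest_in_proj] \<alpha> 2 unfolding \<alpha>_def by auto
    moreover have "dist q (nearest (g \<alpha>)) \<le> K"
      using proj_close_on_geodesic[OF iso _ _ _ q nearest_in_proj] \<alpha> 2 assms(1)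
      unfolding \<beta>_def by auto
    ultimately show ?thesis using dist_triangle3[of p q "nearest (g \<alpha>)"] K_pos
      by (simp add: dist_commute)
  next
    case 3
    have "dist p (nearest (g \<alpha>)) \<le> K"
      using proj_close_on_geodesic[OF iso _ _ _ p nearest_in_proj] \<alpha> 3 \<beta> unfolding \<alpha>_def by auto
    moreover have "dist q (nearest (g \<beta>)) \<le> K"
      using proj_close_on_geodesic[OF iso _ _ _ q nearest_in_proj] \<beta> 3 \<alpha> unfolding \<beta>_def by auto
    moreover have "dist (nearest (g \<alpha>)) (nearest (g \<beta>)) \<le> (\<beta> - \<alpha>) / 2 + K"
      using 3 \<alpha> \<beta> far isometric_on_subset[OF iso]
      by (intro proj_drift_far_path) auto
    moreover have "dist p q \<le> dist p (nearest (g \<alpha>)) + dist (nearest (g \<alpha>)) (nearest (g \<beta>))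
        + dist q (nearest (g \<beta>))"
      by (metis dist_commute dist_triangle order_trans add_right_mono)
    ultimately have "dist p q \<le> 3*K + (\<beta> - \<alpha>) / 2" by linarith
    with len show ?thesis by (simp add: field_simps)
  qed
qed

lemma first_entry_proj:
  assumes "a \<le> b" and iso: "isometric_on {a..b} g"
    and "\<exists>t\<in>{a..b}. infdist (g t) (range x) \<le> 3*K"
    and p: "p \<in> proj (range x) (g a)"
  obtains t where "t \<in> {a..b}" "infdist (g t) (range x) \<le> 3*K" "dist p (nearest (g t)) \<le> 8*K"
    "\<And>s. s \<in> {a..b} \<Longrightarrow> infdist (g s) (range x) \<le> 3*K \<Longrightarrow> t \<le> s"
proof -
  have "continuous_on {a..b} (\<lambda>t. infdist (g t) (range x))"
    by (intro continuous_on_infdist isometric_on_continuous iso)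
  then obtain t where t: "t \<in> {a..b}" "infdist (g t) (range x) \<le> 3*K"
      "\<And>s. s \<in> {a..b} \<Longrightarrow> infdist (g s) (range x) \<le> 3*K \<Longrightarrow> t \<le> s"
    and far: "t = a \<or> (\<forall>s\<in>{a..t}. 3*K \<le> infdist (g s) (range x))"
    using first_sublevel_time[OF assms(1) _ assms(3)] by blast
  have "dist p (nearest (g t)) \<le> 8*K"
  proof (cases "t = a")
    case True
    then show ?thesis using proj_dist_le[OF p nearest_in_proj] K_pos by simp
  next
    case False
    then show ?thesis using far t(1) p nearest_in_proj isometric_on_subset[OF iso]
      by (intro bounded_geodesic_image[of a t g]) auto
  qed
  with t that show ?thesis by blast
qed

lemma last_entry_proj:
  assumes "a \<le> b" and iso: "isometric_on {a..b} g"
    and "\<exists>t\<in>{a..b}. infdist (g t) (range x) \<le> 3*K"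
    and q: "q \<in> proj (range x) (g b)"
  obtains t where "t \<in> {a..b}" "infdist (g t) (range x) \<le> 3*K" "dist q (nearest (g t)) \<le> 8*K"
    "\<And>s. s \<in> {a..b} \<Longrightarrow> infdist (g s) (range x) \<le> 3*K \<Longrightarrow> s \<le> t"
proof -
  have "\<exists>t\<in>{a..b}. infdist (g (a + b - t)) (range x) \<le> 3*K"
  proof -
    from assms(3) obtain t where "t \<in> {a..b}" "infdist (g t) (range x) \<le> 3*K" by blast
    then show ?thesis by (intro bexI[of _ "a + b - t"]) auto
  qed
  moreover have "q \<in> proj (range x) (g (a + b - a))" using q by simp
  ultimately obtain t where t: "t \<in> {a..b}" "infdist (g (a + b - t)) (range x) \<le> 3*K"
      "dist q (nearest (g (a + b - t))) \<le> 8*K"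
      "\<And>s. s \<in> {a..b} \<Longrightarrow> infdist (g (a + b - s)) (range x) \<le> 3*K \<Longrightarrow> t \<le> s"
    using first_entry_proj[OF assms(1) isometric_on_reflect[OF iso]] by blast
  show ?thesis
  proof (rule that[of "a + b - t"])
    fix s assume "s \<in> {a..b}" "infdist (g s) (range x) \<le> 3*K"
    then show "s \<le> a + b - t" using t(4)[of "a + b - s"] by auto
  qed (use t in auto)
qed

lemma proj_far_apart_dist_ge:
  assumes p: "p \<in> proj (range x) z" and q: "q \<in> proj (range x) w" and far: "8*K < dist p q"
  shows "infdist z (range x) + infdist w (range x) + dist p q - 28*K \<le> dist z w"
proof -
  define L where "L = dist z w"
  obtain g where g0: "g 0 = z" and gL: "g L = w" and iso: "isometric_on {0..L} g"
    using geodesic_spaceE[OF geodesic, of z w] unfolding L_def by blast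
  have L: "0 \<le> L" unfolding L_def by simp
  have entry: "\<exists>t\<in>{0..L}. infdist (g t) (range x) \<le> 3*K"
  proof (rule ccontr)
    assume "\<not> ?thesis"
    then have "dist p q \<le> 8*K" using L iso p q g0 gL
      by (intro bounded_geodesic_image[of 0 L g]) force+
    with far show False by simp
  qed
  obtain s where s: "s \<in> {0..L}" "infdist (g s) (range x) \<le> 3*K" "dist p (nearest (g s)) \<le> 8*K"
      "\<And>r. r \<in> {0..L} \<Longrightarrow> infdist (g r) (range x) \<le> 3*K \<Longrightarrow> s \<le> r"
    using first_entry_proj[OF L iso entry] p g0 by blast
  obtain t where t: "t \<in> {0..L}" "infdist (g t) (range x) \<le> 3*K" "dist q (nearest (g t)) \<le> 8*K"
    using last_entry_proj[OF L iso entry] q gL by blast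
  have "s \<le> t" using s(4) t(1,2) by blast
  have ns: "dist (g s) (nearest (g s)) \<le> 3*K" using proj_memD[OF nearest_in_proj[of "g s"]] s(2) by simp
  have nt: "dist (g t) (nearest (g t)) \<le> 3*K" using proj_memD[OF nearest_in_proj[of "g t"]] t(2) by simp
  have st: "dist (g s) (g t) = t - s" using isometric_onD[OF iso s(1) t(1)] \<open>s \<le> t\<close> by simp
  have "dist p q \<le> dist p (nearest (g s)) + dist (nearest (g s)) (g s) + dist (g s) (g t)
      + dist (g t) (nearest (g t)) + dist (nearest (g t)) q"
    using dist_triangle[of p q "nearest (g s)"] dist_triangle[of "nearest (g s)" q "g s"]
      dist_triangle[of "g s" q "g t"] dist_triangle[of "g t" q "nearest (g t)"] by linarith
  then have "dist p q \<le> 22*K + (t - s)"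
    using s(3) t(3) ns nt st dist_commute[of "nearest (g s)" "g s"] dist_commute[of "nearest (g t)" q]
    by linarith
  moreover have "infdist z (range x) \<le> 3*K + s"
    using infdist_triangle[of z "range x" "g s"] s(1,2) isometric_onD[OF iso _ s(1), of 0] L g0 by simp
  moreover have "infdist w (range x) \<le> 3*K + (L - t)"
    using infdist_triangle[of w "range x" "g t"] t(1,2) isometric_onD[OF iso _ t(1), of L] L gL by simp
  ultimately show ?thesis unfolding L_def by linarith
qed

lemma dist_axis_point_ge:
  assumes a: "a \<in> range x" and p: "p \<in> proj (range x) z"
  shows "infdist z (range x) + dist p a - 28*K \<le> dist z a"
proof (cases "8*K < dist p a")
  case True
  have "a \<in> proj (range x) a" using proj_axis_point[OF a] by simp
  from proj_far_apart_dist_ge[OF p this True] a show ?thesis by simp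
next
  case False
  then show ?thesis using infdist_le[OF a, of z] K_pos by linarith
qed

lemma geodesic_between_axis_points_near:
  assumes "a \<in> range x" "b \<in> range x" "dist a u + dist u b = dist a b"
  shows "infdist u (range x) \<le> 28*K"
  using dist_axis_point_ge[OF assms(1) nearest_in_proj, of u]
    dist_axis_point_ge[OF assms(2) nearest_in_proj, of u] dist_triangle3[of a b "nearest u"] assms(3)
  by (simp add: dist_commute)


lemma nearest_index_step_le:
  assumes "dist u v \<le> 1" "infdist u (range x) \<le> 28*K" "infdist v (range x) \<le> 28*K"
  shows "\<bar>real_of_int (nearest_index v - nearest_index u)\<bar> \<le> K * (57*K + 1)"
proof -
  have "dist u (nearest u) \<le> 28*K" "dist v (nearest v) \<le> 28*K"
    using proj_memD[OF nearest_in_proj[of u]] proj_memD[OF nearest_in_proj[of v]] assms(2,3) by simp_all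
  then have "dist (nearest v) (nearest u) \<le> 56*K + 1"
    using assms(1) dist_triangle[of "nearest v" "nearest u" u] dist_triangle[of "nearest v" u v]
      dist_commute[of "nearest v" v] dist_commute[of v u] by linarith
  from index_diff_le[OF this] show ?thesis by (simp add: algebra_simps)
qed

lemma axis_point_near_geodesic:
  assumes "j \<le> b" "b \<le> k"
  obtains u where "dist (x j) u + dist u (x k) = dist (x j) (x k)"
    "dist (x b) u \<le> straightness_const K"
proof -
  define L where "L = dist (x j) (x k)"
  obtain g where g0: "g 0 = x j" and gL: "g L = x k" and iso: "isometric_on {0..L} g"
    using geodesic_spaceE[OF geodesic, of "x j" "x k"] unfolding L_def by blast
  have "0 \<le> L" unfolding L_def by simp
  then obtain N t where t0: "t 0 = 0" and tN: "t N = L"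
    and t_in: "\<And>i. i \<le> N \<Longrightarrow> t i \<in> {0..L}" and t_step: "\<And>i. \<bar>t (Suc i) - t i\<bar> \<le> 1"
    using unit_step_partition by blast
  define u where "u i = g (t i)" for i
  have between: "dist (x j) (u i) + dist (u i) (x k) = L" if "i \<le> N" for i
    using isometric_on_dist_add[OF iso t_in[OF that]] g0 gL unfolding u_def L_def by simp
  have near: "infdist (u i) (range x) \<le> 28*K" if "i \<le> N" for i
    using geodesic_between_axis_points_near[of "x j" "x k"] between[OF that] unfolding L_def by auto
  \<comment> \<open>Along the sampled geodesic the indices of nearest points move in bounded steps from
    about \<open>j\<close> to about \<open>k\<close>, so one of them is close to \<open>b\<close>.\<close>
  define a where "a i = real_of_int (nearest_index (u i))" for i
  have "a 0 \<le> real_of_int b + K * K" "real_of_int b - K * K \<le> a N"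
    using nearest_index_axis_point[of j] nearest_index_axis_point[of k] assms g0 gL t0 tN
    unfolding a_def u_def by (auto simp: abs_le_iff)
  moreover have "\<bar>a (Suc i) - a i\<bar> \<le> K * (57*K + 1)" if "i < N" for i
  proof -
    have "dist (u i) (u (Suc i)) \<le> 1"
      using isometric_onD[OF iso t_in t_in] t_step[of i] that unfolding u_def
      by (simp add: abs_minus_commute)
    then show ?thesis using nearest_index_step_le near that unfolding a_def by simp
  qed
  ultimately obtain i where i: "i \<le> N" "\<bar>a i - real_of_int b\<bar> \<le> K * (57*K + 1) + K * K"
    by (rule discrete_intermediate_value) (use K_pos in auto)
  have "K * \<bar>real_of_int (b - nearest_index (u i))\<bar> \<le> K * (K * (57*K + 1) + K * K)"
    using i(2) K_pos unfolding a_def by (intro mult_left_mono) (auto simp: abs_minus_commute)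
  then have "dist (x b) (nearest (u i)) \<le> K * (K * (57*K + 1) + K * K) + K"
    using dist_axis_upper[of b "nearest_index (u i)"] by linarith
  moreover have "dist (u i) (nearest (u i)) \<le> 28*K"
    using proj_memD[OF nearest_in_proj[of "u i"]] near[OF i(1)] by simp
  ultimately have "dist (x b) (u i) \<le> straightness_const K"
    using dist_triangle[of "x b" "u i" "nearest (u i)"] dist_commute[of "u i" "nearest (u i)"]
    unfolding straightness_const_def by linarith
  with between[OF i(1)] show ?thesis unfolding L_def by (rule that)
qed

lemma axis_almost_geodesic:
  assumes "j \<le> b" "b \<le> k"
  shows "dist (x j) (x b) + dist (x b) (x k) - 2 * straightness_const K \<le> dist (x j) (x k)"
proof -
  obtain u where "dist (x j) u + dist u (x k) = dist (x j) (x k)" "dist (x b) u \<le> straightness_const K"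
    using axis_point_near_geodesic[OF assms] .
  then show ?thesis
    using dist_triangle[of "x j" "x b" u] dist_triangle[of "x b" "x k" u] dist_commute[of u "x b"]
    by linarith
qed

lemma proj_index_on_geodesic_ge:
  assumes "dist (x m0) u + dist u (x m) = dist (x m0) (x m)" "m0 \<le> m" "x n \<in> proj (range x) u"
  shows "real_of_int m0 - K * (straightness_const K + 28*K + K) \<le> real_of_int n"
proof (cases "n < m0")
  case False
  have "0 \<le> K * (straightness_const K + 28*K + K)" using K_pos straightness_const_nonneg by simp
  with False show ?thesis by linarith
next
  case True
  have "infdist u (range x) + dist (x n) (x m0) - 28*K \<le> dist u (x m0)"
    "infdist u (range x) + dist (x n) (x m) - 28*K \<le> dist u (x m)"
    using dist_axis_point_ge[OF _ assms(3)] by simp_all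
  moreover have "dist (x n) (x m0) + dist (x m0) (x m) - 2 * straightness_const K \<le> dist (x n) (x m)"
    using axis_almost_geodesic[of n m0 m] True assms(2) by simp
  ultimately have "dist (x n) (x m0) \<le> straightness_const K + 28*K"
    using assms(1) infdist_nonneg[of u "range x"] dist_commute[of u "x m0"] by linarith
  then have "\<bar>real_of_int (n - m0)\<bar> \<le> K * (straightness_const K + 28*K + K)" by (rule index_diff_le)
  then show ?thesis by (simp add: abs_le_iff)
qed

lemma proj_sub_axis_near_clamp:
  assumes k: "x k \<in> proj (range x) z" and c: "is_clamp J k c" and e: "e \<in> proj (x ` J) z"
  shows "dist e (x c) \<le> proj_const K"
proof -
  obtain j where j: "j \<in> J" "e = x j" using proj_memD[OF e] by auto
  have "c \<in> J" using c unfolding is_clamp_def by simp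
  then have closest: "dist z (x j) \<le> dist z (x c)"
    using proj_memD[OF e] j infdist_le[of "x c" "x ` J" z] by auto
  have "infdist z (range x) + dist (x k) (x j) - 28*K \<le> dist z (x j)"
    using dist_axis_point_ge[OF _ k] by simp
  then have far: "dist z (x k) + dist (x k) (x j) - 28*K \<le> dist z (x j)"
    using proj_memD[OF k] by simp
  have via_k: "dist z (x c) \<le> dist z (x k) + dist (x k) (x c)" by (rule dist_triangle)
  have "c = k \<or> (c < k \<and> (\<forall>i\<in>J. i \<le> c)) \<or> (k < c \<and> (\<forall>i\<in>J. c \<le> i))"
    using c unfolding is_clamp_def by simp
  then show ?thesis
  proof (elim disjE conjE)
    assume "c = k"
    then show ?thesis using closest far j straightness_const_nonneg unfolding proj_const_def
      by (simp add: dist_commute)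
  next
    assume "c < k" "\<forall>i\<in>J. i \<le> c"
    then have "dist (x j) (x c) + dist (x c) (x k) - 2 * straightness_const K \<le> dist (x j) (x k)"
      using axis_almost_geodesic[of j c k] j by simp
    then show ?thesis using closest far via_k j unfolding proj_const_def by (simp add: dist_commute)
  next
    assume "k < c" "\<forall>i\<in>J. c \<le> i"
    then have "dist (x k) (x c) + dist (x c) (x j) - 2 * straightness_const K \<le> dist (x k) (x j)"
      using axis_almost_geodesic[of k c j] j by simp
    then show ?thesis using closest far via_k j unfolding proj_const_def by (simp add: dist_commute)
  qed
qed

lemma diam_proj_segment_nonpositive_ray:
  "diam ({x 0} \<union> proj_set (x ` {0..int M}) (x ` {..0})) \<le> ereal (2 * proj_const K)"
proof (rule diam_insert_centre_le)
  fix e assume "e \<in> proj_set (x ` {0..int M}) (x ` {..0})"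
  then obtain i where i: "i \<le> 0" and e: "e \<in> proj (x ` {0..int M}) (x i)"
    unfolding proj_set_def by auto
  have "is_clamp {0..int M} i 0" using i unfolding is_clamp_def by auto
  from proj_sub_axis_near_clamp[OF _ this e] proj_axis_point[of "x i"]
  show "dist e (x 0) \<le> proj_const K" by simp
qed (rule proj_const_nonneg)

lemma proj_sub_axis_nonempty:
  assumes "j0 \<in> J"
  shows "proj (x ` J) z \<noteq> {}"
proof -
  define d where "d = infdist z (x ` J)"
  define F where "F = {j \<in> J. dist z (x j) \<le> d + 1}"
  define r where "r = \<lceil>K * (d + 1 + dist z (x j0) + K)\<rceil>"
  have "F \<subseteq> {j0 - r .. j0 + r}"
  proof
    fix j assume "j \<in> F"
    then have "dist (x j) (x j0) \<le> d + 1 + dist z (x j0)"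
      unfolding F_def using dist_triangle3[of "x j" "x j0" z] by simp
    then have "\<bar>real_of_int (j - j0)\<bar> \<le> K * (d + 1 + dist z (x j0) + K)" by (rule index_diff_le)
    then show "j \<in> {j0 - r .. j0 + r}" unfolding r_def by (simp add: abs_le_iff) linarith
  qed
  then have "finite F" by (rule finite_subset) simp
  moreover have "F \<noteq> {}"
  proof
    assume "F = {}"
    then have "d + 1 \<le> infdist z (x ` J)"
      using assms unfolding F_def by (intro infdist_geI) force+
    then show False unfolding d_def by simp
  qed
  ultimately have "arg_min_on (\<lambda>j. dist z (x j)) F \<in> F"
    "\<And>j. j \<in> F \<Longrightarrow> dist z (x (arg_min_on (\<lambda>j. dist z (x j)) F)) \<le> dist z (x j)"
    by (auto intro: arg_min_if_finite(1) arg_min_least)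
  then obtain m where m: "m \<in> F" "\<And>j. j \<in> F \<Longrightarrow> dist z (x m) \<le> dist z (x j)" by blast
  have "dist z (x m) \<le> dist z (x j)" if "j \<in> J" for j
    using m that unfolding F_def by (cases "j \<in> F") (auto simp: F_def)
  then have "dist z (x m) \<le> infdist z (x ` J)" using assms by (intro infdist_geI) auto
  moreover have "infdist z (x ` J) \<le> dist z (x m)" using m(1) unfolding F_def by (intro infdist_le) auto
  ultimately have "x m \<in> proj (x ` J) z" using m(1) unfolding proj_def F_def by auto
  then show ?thesis by auto
qed

lemma clamps_apart_imp_nearest_close:
  assumes d: "dist z w \<le> infdist z (x ` J) - sub_axis_const K"
    and kz: "x kz \<in> proj (range x) z" and kw: "x kw \<in> proj (range x) w"
    and cz: "is_clamp J kz cz" and cw: "is_clamp J kw cw" and "cz \<noteq> cw"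
  shows "dist (x kz) (x kw) \<le> 8*K"
proof (rule ccontr)
  assume "\<not> ?thesis"
  then have far: "8*K < dist (x kz) (x kw)" by simp
  have "cz \<in> J" "cw \<in> J" using cz cw unfolding is_clamp_def by simp_all
  then have "infdist z (x ` J) \<le> dist z (x kz) + dist (x kz) (x cz)"
    using infdist_le[of "x cz" "x ` J" z] dist_triangle[of z "x cz" "x kz"] by simp
  then have short: "dist (x kz) (x kw) < dist (x kz) (x cz) - 2 * straightness_const K"
    using proj_far_apart_dist_ge[OF kz kw far] proj_memD[OF kz] d infdist_nonneg[of w "range x"]
      sub_axis_const_ge(2) by linarith
  have "cz = kz \<or> (cz < kz \<and> (\<forall>i\<in>J. i \<le> cz)) \<or> (kz < cz \<and> (\<forall>i\<in>J. cz \<le> i))"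
    using cz unfolding is_clamp_def by simp
  then show False
  proof (elim disjE conjE)
    assume "cz = kz"
    then show False using short straightness_const_nonneg zero_le_dist[of "x kz" "x kw"] by simp
  next
    assume "cz < kz" "\<forall>i\<in>J. i \<le> cz"
    then have "kw \<le> cz" using cw \<open>cz \<noteq> cw\<close> \<open>cw \<in> J\<close> \<open>cz \<in> J\<close> unfolding is_clamp_def by force
    then have "dist (x kw) (x cz) + dist (x cz) (x kz) - 2 * straightness_const K \<le> dist (x kw) (x kz)"
      using axis_almost_geodesic[of kw cz kz] \<open>cz < kz\<close> by simp
    then show False using short zero_le_dist[of "x cz" "x kw"] by (simp add: dist_commute)
  next
    assume "kz < cz" "\<forall>i\<in>J. cz \<le> i"
    then have "cz \<le> kw" using cw \<open>cz \<noteq> cw\<close> \<open>cw \<in> J\<close> \<open>cz \<in> J\<close> unfolding is_clamp_def by force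
    then have "dist (x kz) (x cz) + dist (x cz) (x kw) - 2 * straightness_const K \<le> dist (x kz) (x kw)"
      using axis_almost_geodesic[of kz cz kw] \<open>kz < cz\<close> by simp
    then show False using short zero_le_dist[of "x cz" "x kw"] by simp
  qed
qed

lemma clamp_points_close:
  assumes d: "dist z w \<le> infdist z (x ` J) - sub_axis_const K"
    and kz: "x kz \<in> proj (range x) z" and kw: "x kw \<in> proj (range x) w"
    and cz: "is_clamp J kz cz" and cw: "is_clamp J kw cw"
  shows "dist (x cz) (x cw) \<le> 9 * K^3 + K"
proof (cases "cz = cw")
  case True
  then show ?thesis using K_pos by simp
next
  case False
  then have "dist (x kz) (x kw) \<le> 8*K" using clamps_apart_imp_nearest_close[OF assms] by blast
  then have "\<bar>real_of_int (kz - kw)\<bar> \<le> K * (8*K + K)" by (rule index_diff_le)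
  moreover have "\<bar>cz - cw\<bar> \<le> \<bar>kz - kw\<bar>" by (rule is_clamp_dist_le[OF cz cw])
  ultimately have "\<bar>real_of_int (cz - cw)\<bar> \<le> 9 * K^2" by (simp add: power2_eq_square)
  then have "K * \<bar>real_of_int (cz - cw)\<bar> \<le> K * (9 * K^2)" using K_pos by (intro mult_left_mono) auto
  then show ?thesis using dist_axis_upper[of cz cw] by (simp add: power3_eq_cube power2_eq_square)
qed

lemma sub_axis_contracting:
  assumes J: "consecutive J"
  shows "contracting (sub_axis_const K) (x ` J)"
  unfolding contracting_def
proof (intro conjI allI impI)
  fix z show "proj (x ` J) z \<noteq> {}"
    using J unfolding consecutive_def by (auto dest: proj_sub_axis_nonempty)
next
  fix z w assume d: "dist z w \<le> infdist z (x ` J) - sub_axis_const K"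
  obtain cz cw where cz: "is_clamp J (nearest_index z) cz" and cw: "is_clamp J (nearest_index w) cw"
    using is_clamp_exists[OF J] by metis
  have near: "dist e (x cz) \<le> proj_const K + 9 * K^3 + K"
    if "e \<in> proj (x ` J) z \<union> proj (x ` J) w" for e
  proof (cases "e \<in> proj (x ` J) z")
    case True
    then show ?thesis
      using proj_sub_axis_near_clamp[OF nearest_in_proj cz True] K_pos zero_less_power[OF K_pos, of 3]
      by linarith
  next
    case False
    then have "dist e (x cw) \<le> proj_const K"
      using that proj_sub_axis_near_clamp[OF nearest_in_proj cw] by blast
    then show ?thesis
      using clamp_points_close[OF d nearest_in_proj nearest_in_proj cz cw]
        dist_triangle[of e "x cz" "x cw"] dist_commute[of "x cw" "x cz"] by linarith
  qed
  show "diam (proj (x ` J) z \<union> proj (x ` J) w) \<le> ereal (sub_axis_const K)"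
  proof (rule diam_leI)
    fix e1 e2 assume "e1 \<in> proj (x ` J) z \<union> proj (x ` J) w" "e2 \<in> proj (x ` J) z \<union> proj (x ` J) w"
    then have "dist e1 (x cz) \<le> proj_const K + 9 * K^3 + K" "dist e2 (x cz) \<le> proj_const K + 9 * K^3 + K"
      using near by blast+
    then show "dist e1 e2 \<le> sub_axis_const K"
      using dist_triangle2[of e1 e2 "x cz"] sub_axis_const_ge(3) by linarith
  qed
qed

lemma sub_axis:
  assumes J: "consecutive J"
  shows "contracting_axis (sub_axis_const K) J x"
  unfolding contracting_axis_def
proof (intro conjI ballI)
  show "consecutive J" by fact
  show "contracting (sub_axis_const K) (x ` J)" using sub_axis_contracting[OF J] .
  fix i j
  have "\<bar>real_of_int (i - j)\<bar> / sub_axis_const K \<le> \<bar>real_of_int (i - j)\<bar> / K"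
    using sub_axis_const_ge(1) K_pos by (intro divide_left_mono) auto
  then show "\<bar>real_of_int (i - j)\<bar> / sub_axis_const K - sub_axis_const K \<le> dist (x i) (x j)"
    using dist_axis_lower[of i j] sub_axis_const_ge(1) by linarith
  have "K * \<bar>real_of_int (i - j)\<bar> \<le> sub_axis_const K * \<bar>real_of_int (i - j)\<bar>"
    using sub_axis_const_ge(1) by (intro mult_right_mono) auto
  then show "dist (x i) (x j) \<le> sub_axis_const K * \<bar>real_of_int (i - j)\<bar> + sub_axis_const K"
    using dist_axis_upper[of i j] sub_axis_const_ge(1) by linarith
qed

end

locale independent_lines = X: contracting_line K x + Y: contracting_line K y
  for K :: real and x y :: "int \<Rightarrow> 'a::metric_space" +
  assumes indep: "independent x y"
begin

lemma other_axis_eventually_far: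
  assumes "R > 0"
  obtains N where "\<And>m. N < \<bar>m\<bar> \<Longrightarrow> R \<le> infdist (y m) (range x)"
proof -
  obtain N where N: "\<And>n m. dist (x n) (y m) < R \<Longrightarrow> \<bar>n\<bar> \<le> N \<and> \<bar>m\<bar> \<le> N"
    using indep assms unfolding independent_def by blast
  show ?thesis
  proof (rule that)
    fix m assume m: "N < \<bar>m\<bar>"
    show "R \<le> infdist (y m) (range x)"
    proof (rule infdist_geI)
      fix a assume "a \<in> range x"
      then obtain n where "a = x n" by auto
      then show "R \<le> dist (y m) a" using N[of n m] m by (force simp: dist_commute)
    qed simp
  qed
qed

lemma proj_eventually_stable:
  obtains m0 where "0 \<le> m0"
    "\<And>m p q. m0 \<le> m \<Longrightarrow> p \<in> proj (range x) (y m0) \<Longrightarrow> q \<in> proj (range x) (y m)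
      \<Longrightarrow> dist p q \<le> 8*K"
proof -
  define \<Delta> where "\<Delta> = K * (straightness_const K + 28*K + K)"
  obtain N where N: "\<And>m. N < \<bar>m\<bar> \<Longrightarrow> 31*K \<le> infdist (y m) (range x)"
    using other_axis_eventually_far[of "31*K"] X.K_pos by auto
  define m0 where "m0 = max 0 (N + 1 + \<lceil>\<Delta>\<rceil>)"
  \<comment> \<open>A geodesic from \<open>y m0\<close> to a later \<open>y m\<close> stays near \<open>y\<close> at indices beyond \<open>N\<close>,
    hence far from \<open>x\<close>.\<close>
  have far: "3*K \<le> infdist u (range x)"
    if between: "dist (y m0) u + dist u (y m) = dist (y m0) (y m)" and "m0 \<le> m" for m u
  proof -
    have "real_of_int m0 - \<Delta> \<le> real_of_int (Y.nearest_index u)"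
      using Y.proj_index_on_geodesic_ge[OF that Y.nearest_in_proj] unfolding \<Delta>_def .
    moreover have "real_of_int N + 1 + \<Delta> \<le> real_of_int m0"
      unfolding m0_def using le_of_int_ceiling[of \<Delta>] by linarith
    ultimately have "N < \<bar>Y.nearest_index u\<bar>" by linarith
    then have "31*K \<le> infdist (Y.nearest u) (range x)" by (rule N)
    moreover have "infdist u (range y) \<le> 28*K"
      using Y.geodesic_between_axis_points_near[of "y m0" "y m" u] between by simp
    then have "dist u (Y.nearest u) \<le> 28*K" using proj_memD[OF Y.nearest_in_proj[of u]] by simp
    ultimately show ?thesis
      using infdist_triangle[of "Y.nearest u" "range x" u] dist_commute[of u "Y.nearest u"] by linarith
  qed
  show ?thesis
  proof (rule that)
    show "0 \<le> m0" unfolding m0_def by simp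
    fix m p q assume m: "m0 \<le> m" and pq: "p \<in> proj (range x) (y m0)" "q \<in> proj (range x) (y m)"
    define L where "L = dist (y m0) (y m)"
    obtain g where g0: "g 0 = y m0" and gL: "g L = y m" and iso: "isometric_on {0..L} g"
      using geodesic_spaceE[OF X.geodesic, of "y m0" "y m"] unfolding L_def by blast
    have "3*K \<le> infdist (g t) (range x)" if "t \<in> {0..L}" for t
      using far[OF _ m] isometric_on_dist_add[OF iso that] g0 gL unfolding L_def by simp
    then show "dist p q \<le> 8*K"
      using X.bounded_geodesic_image[OF _ iso] pq g0 gL unfolding L_def by simp
  qed
qed

lemma proj_index_bounded_nonneg:
  obtains N where "\<And>m k. 0 \<le> m \<Longrightarrow> x k \<in> proj (range x) (y m) \<Longrightarrow> \<bar>real_of_int k\<bar> \<le> N"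
proof -
  obtain m0 where "0 \<le> m0" and stable: "\<And>m p q. m0 \<le> m \<Longrightarrow> p \<in> proj (range x) (y m0)
      \<Longrightarrow> q \<in> proj (range x) (y m) \<Longrightarrow> dist p q \<le> 8*K"
    using proj_eventually_stable by blast
  define n0 where "n0 = X.nearest_index (y m0)"
  define R where "R = K * real_of_int m0 + K + dist (y 0) (x 0)"
  define N where "N = max (\<bar>real_of_int n0\<bar> + K * (8*K + K)) (K * (2 * R + K))"
  show ?thesis
  proof (rule that)
    fix m k assume m: "0 \<le> m" and k: "x k \<in> proj (range x) (y m)"
    show "\<bar>real_of_int k\<bar> \<le> N"
    proof (cases "m \<le> m0")
      case True
      have "K * \<bar>real_of_int (m - 0)\<bar> \<le> K * real_of_int m0" using True m X.K_pos by simp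
      then have "dist (y m) (x 0) \<le> R"
        using Y.dist_axis_upper[of m 0] dist_triangle[of "y m" "x 0" "y 0"] unfolding R_def by linarith
      then have "K * (2 * dist (y m) (x 0) + K) \<le> K * (2 * R + K)" using X.K_pos by simp
      then show ?thesis using X.proj_index_le[OF k] unfolding N_def by linarith
    next
      case False
      then have "dist (x n0) (x k) \<le> 8*K" using stable[OF _ X.nearest_in_proj k] unfolding n0_def by simp
      then have "\<bar>real_of_int (n0 - k)\<bar> \<le> K * (8*K + K)" by (rule X.index_diff_le)
      moreover have "\<bar>real_of_int k\<bar> \<le> \<bar>real_of_int n0\<bar> + \<bar>real_of_int (n0 - k)\<bar>"
        using abs_triangle_ineq4[of "real_of_int n0" "real_of_int (n0 - k)"] by simp
      ultimately show ?thesis unfolding N_def by linarith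
    qed
  qed
qed

lemma proj_index_bounded:
  obtains N where "\<And>m k. x k \<in> proj (range x) (y m) \<Longrightarrow> \<bar>real_of_int k\<bar> \<le> N"
proof -
  interpret reflected: independent_lines K x "\<lambda>m. y (- m)"
    by (simp add: independent_lines_def independent_lines_axioms_def contracting_line_def
        X.geodesic X.K_gt_1 X.axis contracting_axis_reflect[OF Y.axis] independent_reflect[OF indep])
  obtain N1 where N1: "\<And>m k. 0 \<le> m \<Longrightarrow> x k \<in> proj (range x) (y m) \<Longrightarrow> \<bar>real_of_int k\<bar> \<le> N1"
    using proj_index_bounded_nonneg by blast
  obtain N2 where N2: "\<And>m k. 0 \<le> m \<Longrightarrow> x k \<in> proj (range x) (y (- m)) \<Longrightarrow> \<bar>real_of_int k\<bar> \<le> N2"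
    using reflected.proj_index_bounded_nonneg by blast
  show ?thesis
  proof (rule that)
    fix m k assume k: "x k \<in> proj (range x) (y m)"
    show "\<bar>real_of_int k\<bar> \<le> max N1 N2"
    proof (cases "0 \<le> m")
      case True
      then show ?thesis using N1[OF _ k] by simp
    next
      case False
      then show ?thesis using N2[of "- m" k] k by simp
    qed
  qed
qed

lemma diam_origin_proj_other_axis:
  obtains B where "\<And>J. consecutive J \<Longrightarrow> 0 \<in> J
    \<Longrightarrow> diam ({x 0} \<union> proj_set (x ` J) (range y)) \<le> ereal B"
proof -
  obtain N where N: "\<And>m k. x k \<in> proj (range x) (y m) \<Longrightarrow> \<bar>real_of_int k\<bar> \<le> N"
    using proj_index_bounded by blast
  define B where "B = proj_const K + K * \<bar>N\<bar> + K"
  have near: "dist e (x 0) \<le> B"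
    if J: "consecutive J" "0 \<in> J" and e: "e \<in> proj_set (x ` J) (range y)" for J e
  proof -
    obtain m where em: "e \<in> proj (x ` J) (y m)" using e unfolding proj_set_def by auto
    obtain c where c: "is_clamp J (X.nearest_index (y m)) c" using is_clamp_exists[OF J(1)] .
    have "\<bar>real_of_int c\<bar> \<le> \<bar>real_of_int (X.nearest_index (y m))\<bar>"
      using is_clamp_abs_le[OF c J(2)] by (simp only: of_int_abs[symmetric] of_int_le_iff)
    also have "\<dots> \<le> \<bar>N\<bar>" using N[OF X.nearest_in_proj[of "y m"]] abs_ge_self[of N] by linarith
    finally have "K * \<bar>real_of_int (c - 0)\<bar> \<le> K * \<bar>N\<bar>" using X.K_pos by simp
    then have "dist (x c) (x 0) \<le> K * \<bar>N\<bar> + K" using X.dist_axis_upper[of c 0] by linarith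
    moreover have "dist e (x c) \<le> proj_const K"
      by (rule X.proj_sub_axis_near_clamp[OF X.nearest_in_proj c em])
    ultimately show ?thesis using dist_triangle[of e "x 0" "x c"] unfolding B_def by linarith
  qed
  have "0 \<le> B" using X.proj_const_nonneg X.K_pos unfolding B_def by simp
  show ?thesis
  proof (rule that)
    fix J assume "consecutive J" "0 \<in> J"
    then show "diam ({x 0} \<union> proj_set (x ` J) (range y)) \<le> ereal (2 * B)"
      using near \<open>0 \<le> B\<close> by (intro diam_insert_centre_le) auto
  qed
qed

end

theorem lemma3p10:
  fixes K :: real and x y :: "int \<Rightarrow> 'a::metric_space"
  assumes "geodesic_space TYPE('a)"
    and "K > 1"
    and "contracting_axis K UNIV x" and "contracting_axis K UNIV y"
    and "independent x y"
  shows "\<exists>K' > 0.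
     (\<forall>J. consecutive J \<longrightarrow> contracting_axis K' J x \<and> contracting_axis K' J y) \<and>
     (\<forall>J. consecutive J \<and> 0 \<in> J \<longrightarrow> diam ({x 0} \<union> proj_set (x ` J) (range y)) < ereal K') \<and>
     (\<forall>M::nat. M > 0 \<longrightarrow> diam ({x 0} \<union> proj_set (x ` {0..int M}) (x ` {..0})) < ereal K')"
proof -
  interpret independent_lines K x y
    using assms by (simp add: independent_lines_def independent_lines_axioms_def contracting_line_def)
  obtain B where B: "\<And>J. consecutive J \<Longrightarrow> 0 \<in> J
      \<Longrightarrow> diam ({x 0} \<union> proj_set (x ` J) (range y)) \<le> ereal B"
    using diam_origin_proj_other_axis by blast
  define K' where "K' = sub_axis_const K + \<bar>B\<bar> + 2 * proj_const K + 1"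
  have "0 < sub_axis_const K" using X.sub_axis_const_ge(1) X.K_pos by linarith
  then have K'_ge: "sub_axis_const K \<le> K'" "ereal B < ereal K'"
      "ereal (2 * proj_const K) < ereal K'"
    using X.proj_const_nonneg unfolding K'_def by simp_all
  show ?thesis
  proof (intro exI[of _ K'] conjI allI impI)
    show "0 < K'" using \<open>0 < sub_axis_const K\<close> K'_ge(1) by linarith
    fix J assume "consecutive J"
    then show "contracting_axis K' J x" "contracting_axis K' J y"
      using contracting_axis_mono[OF _ K'_ge(1) \<open>0 < sub_axis_const K\<close>] X.sub_axis Y.sub_axis
      by auto
  next
    fix J assume "consecutive J \<and> 0 \<in> J"
    then have "diam ({x 0} \<union> proj_set (x ` J) (range y)) \<le> ereal B" using B by blast
    then show "diam ({x 0} \<union> proj_set (x ` J) (range y)) < ereal K'"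
      using K'_ge(2) by (rule order.strict_trans1)
  next
    fix M :: nat
    show "diam ({x 0} \<union> proj_set (x ` {0..int M}) (x ` {..0})) < ereal K'"
      using X.diam_proj_segment_nonpositive_ray K'_ge(3) by (rule order.strict_trans1)
  qed
qed

end
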